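(* Let $v=(x,y,z)\in S$ be a point with at least one irrational coordinate. Then $G^k(v)\ne(0,0,0)$ for all $k\ge0$, so its itinerary is defined, and: the itinerary of $v$ consists only of symbols of type $\mathbb{A}$ if and only if $y=z=0$. Moreover, if the itinerary is $\mathbb{A}_{a_1},\mathbb{A}_{a_2},\dots$, then $x=[0;a_1,a_2,\dots]$ (regular continued fraction).
   Context: Let $S = \{(x,y,z)\in\mathbb{R}^3 : 0\le z\le y\le x\le 1\}$. For integers $n\ge1$ define $\mathbb{A}_n = \{\frac1{n+1} < x \le \frac1n,\ 0\le z\le y\le 1-nx\}$, $\mathbb{B}_n = \{0\le z\le 1-nx < y \le x\}$, $\mathbb{C}_n = \{1-nx < z \le y \le x \le \frac1n\}$; together with $\{(0,0,0)\}$ they partition $S$. The 3-dimensional Gauss map $G:S\to S$ is $G(0,0,0)=(0,0,0)$, $G(x,y,z)=\left(\frac1x-n,\frac yx,\frac zx\right)$ on $\mathbb{A}_n$, $G(x,y,z)=\left(\frac{1-y}{x}-n+1,\frac{x-y+z}{x},\frac{x-y}{x}\right)$ on $\mathbb{B}_n$, $G(x,y,z)=\left(\frac{1-z}{x}-n+1,\frac{x-z}{x},\frac{y-z}{x}\right)$ on $\mathbb{C}_n$. For a point $v$ whose forward orbit never hits the origin, its itinerary is the sequence $\mathbb{X}_{a_1},\mathbb{X}_{a_2},\dots$ ($\mathbb{X}\in\{\mathbb{A},\mathbb{B},\mathbb{C}\}$, $a_k\ge1$) with $G^{k-1}(v)\in\mathbb{X}_{a_k}$ for all $k\ge1$. 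*)

theory Defs
  imports Complex_Main
begin

type_synonym pt = "real \<times> real \<times> real"

definition S3 :: "pt set" where
  "S3 = {(x,y,z). 0 \<le> z \<and> z \<le> y \<and> y \<le> x \<and> x \<le> 1}"

definition regA :: "nat \<Rightarrow> pt set" where
  "regA n = {(x,y,z). 1 / (real n + 1) < x \<and> x \<le> 1 / real n \<and>
                      0 \<le> z \<and> z \<le> y \<and> y \<le> 1 - real n * x}"

definition regB :: "nat \<Rightarrow> pt set" where
  "regB n = {(x,y,z). 0 \<le> z \<and> z \<le> 1 - real n * x \<and> 1 - real n * x < y \<and> y \<le> x}"

definition regC :: "nat \<Rightarrow> pt set" where
  "regC n = {(x,y,z). 1 - real n * x < z \<and> z \<le> y \<and> y \<le> x \<and> x \<le> 1 / real n}"

datatype sym = SA | SB | SC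

definition region :: "sym \<Rightarrow> nat \<Rightarrow> pt set" where
  "region t n = (case t of SA \<Rightarrow> regA n | SB \<Rightarrow> regB n | SC \<Rightarrow> regC n)"

text \<open>On S the regions A_n, B_n, C_n (n >= 1) together
  with the origin partition S, so the index n below is unique. Outside S the value
  is irrelevant (we return the point itself).\<close>
definition G3 :: "pt \<Rightarrow> pt" where
  "G3 v = (let (x,y,z) = v in
     if v = (0,0,0) then (0,0,0)
     else if (\<exists>n\<ge>1. v \<in> regA n) then
       (let n = real (THE n. n \<ge> 1 \<and> v \<in> regA n) in (1/x - n, y/x, z/x))
     else if (\<exists>n\<ge>1. v \<in> regB n) then
       (let n = real (THE n. n \<ge> 1 \<and> v \<in> regB n) in
          ((1 - y)/x - n + 1, (x - y + z)/x, (x - y)/x))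
     else if (\<exists>n\<ge>1. v \<in> regC n) then
       (let n = real (THE n. n \<ge> 1 \<and> v \<in> regC n) in
          ((1 - z)/x - n + 1, (x - z)/x, (y - z)/x))
     else v)"

text \<open>(t, a) is an itinerary of v: for all k >= 1, a k >= 1 and G^(k-1)(v) lies in
  the region X_{a_k} with X = t k. Indices 0 of t and a are unused.\<close>
definition is_itinerary :: "pt \<Rightarrow> (nat \<Rightarrow> sym) \<Rightarrow> (nat \<Rightarrow> nat) \<Rightarrow> bool" where
  "is_itinerary v t a \<longleftrightarrow> (\<forall>k\<ge>1. a k \<ge> 1 \<and> (G3 ^^ (k - 1)) v \<in> region (t k) (a k))"

fun cf :: "(nat \<Rightarrow> nat) \<Rightarrow> nat \<Rightarrow> nat \<Rightarrow> real" where
  "cf a i 0 = 0"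
| "cf a i (Suc k) = 1 / (real (a i) + cf a (Suc i) k)"

definition cf_value :: "(nat \<Rightarrow> nat) \<Rightarrow> real \<Rightarrow> bool" where
  "cf_value a x \<longleftrightarrow> (\<lambda>k. cf a 1 k) \<longlonglongrightarrow> x"

end

theory Submission
  imports Defs
begin

(* Each branch of G is a projective map with rational coefficients that is invertible over Q,
   so an orbit starting at an irrational point never reaches the origin; as the regions
   partition S minus the origin, the itinerary exists.  The x-axis is invariant and lies in
   the A-regions, where G acts as the Gauss map x -> 1/x - n.  Conversely, along an all-A
   itinerary the first coordinates X_k are the continued fraction tails of x, which gives
   x = [0; a_1, a_2, ...]; and y/x is invariant, so y <= X_0 X_1 ... X_(k-1), which tends
   to 0 because X_k X_(k+1) <= 1/2. *)

definition gauss_branch :: "sym \<Rightarrow> nat \<Rightarrow> pt \<Rightarrow> pt" where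
  "gauss_branch t n = (\<lambda>(x,y,z). case t of
      SA \<Rightarrow> (1/x - real n, y/x, z/x)
    | SB \<Rightarrow> ((1 - y)/x - real n + 1, (x - y + z)/x, (x - y)/x)
    | SC \<Rightarrow> ((1 - z)/x - real n + 1, (x - z)/x, (y - z)/x))"

lemma region_x_bounds:
  assumes "(x,y,z) \<in> region t n" "n \<ge> 1"
  shows "real n * x \<le> 1" "1 < (real n + 1) * x"
proof -
  have "x \<le> 1/real n \<or> real n * x \<le> 1"
    using assms by (cases t) (auto simp: region_def regA_def regB_def regC_def)
  then show "real n * x \<le> 1"
    using assms(2) by (auto simp: le_divide_eq mult.commute)
  have "1/(real n+1) < x \<or> 1 < (real n + 1) * x"
    using assms by (cases t) (auto simp: region_def regA_def regB_def regC_def algebra_simps)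
  then show "1 < (real n + 1) * x"
    by (auto simp: divide_less_eq mult.commute add_pos_nonneg)
qed

lemma region_x_pos: "(x,y,z) \<in> region t n \<Longrightarrow> n \<ge> 1 \<Longrightarrow> 0 < x"
  using region_x_bounds(1,2)[of x y z t n]
  by (smt (verit) mult_nonneg_nonpos of_nat_0_le_iff)

lemma index_le_of_bounds:
  fixes x :: real
  assumes "real n * x \<le> 1" "1 < (real m + 1) * x"
  shows "n \<le> m"
proof (rule ccontr)
  assume "\<not> n \<le> m"
  then have "real m + 1 \<le> real n" by simp
  moreover have "0 < x" using assms(2) by (smt (verit) mult_nonneg_nonpos of_nat_0_le_iff)
  ultimately have "(real m + 1) * x \<le> real n * x" by (intro mult_right_mono) auto
  with assms show False by simp
qed

lemma regions_disjoint:
  assumes "w \<in> region t n" "n \<ge> 1" "w \<in> region t' m" "m \<ge> 1"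
  shows "n = m \<and> t = t'"
proof -
  obtain x y z where w: "w = (x,y,z)" by (cases w)
  have "n = m"
    using region_x_bounds[of x y z t n] region_x_bounds[of x y z t' m] assms w
    by (metis index_le_of_bounds le_antisym)
  with assms show ?thesis
    unfolding w by (cases t; cases t') (auto simp: region_def regA_def regB_def regC_def)
qed

lemma G3_eq_gauss_branch:
  assumes "w \<in> region t n" "n \<ge> 1"
  shows "G3 w = gauss_branch t n w"
proof -
  obtain x y z where w: "w = (x,y,z)" by (cases w)
  have "w \<noteq> (0,0,0)" using region_x_pos assms w by fastforce
  have unique: "(THE m. m \<ge> 1 \<and> w \<in> region t' m) = n" if "t' = t" for t'
    using assms regions_disjoint that by (intro the_equality) blast+
  have not_in: "\<not> (\<exists>m\<ge>1. w \<in> region t' m)" if "t' \<noteq> t" for t'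
    using assms regions_disjoint that by blast
  have "(\<exists>m\<ge>1. w \<in> regA m) \<longleftrightarrow> t = SA" "(\<exists>m\<ge>1. w \<in> regB m) \<longleftrightarrow> t = SB"
    using assms not_in[of SA] not_in[of SB] by (auto simp: region_def split: sym.splits)
  moreover have "(THE m. m \<ge> 1 \<and> w \<in> regA m) = n" if "t = SA"
    using unique[of SA] that by (simp add: region_def)
  moreover have "(THE m. m \<ge> 1 \<and> w \<in> regB m) = n" if "t = SB"
    using unique[of SB] that by (simp add: region_def)
  moreover have "(THE m. m \<ge> 1 \<and> w \<in> regC m) = n" if "t = SC"
    using unique[of SC] that by (simp add: region_def)
  ultimately show ?thesis
    using \<open>w \<noteq> (0,0,0)\<close> assms
    by (cases t) (auto simp: G3_def gauss_branch_def region_def w Let_def)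
qed

lemma S3_region_cover:
  assumes "w \<in> S3" "w \<noteq> (0,0,0)"
  obtains t n where "n \<ge> 1" "w \<in> region t n"
proof -
  obtain x y z where w: "w = (x,y,z)" by (cases w)
  have s: "0 \<le> z" "z \<le> y" "y \<le> x" "x \<le> 1" using assms(1) by (auto simp: S3_def w)
  have "x > 0" using s assms(2) w by force
  define n where "n = nat \<lfloor>1/x\<rfloor>"
  have "1 \<le> 1/x" using s \<open>x > 0\<close> by (simp add: le_divide_eq)
  then have n1: "n \<ge> 1" and "real n \<le> 1/x" "1/x < real n + 1"
    unfolding n_def by linarith+
  then have nx: "real n * x \<le> 1" "1 < (real n + 1) * x"
    using \<open>x > 0\<close> by (auto simp: le_divide_eq divide_less_eq mult.commute)
  then have xb: "1/(real n+1) < x" "x \<le> 1/real n"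
    using n1 by (auto simp: le_divide_eq divide_less_eq mult.commute)
  consider "y \<le> 1 - real n * x" | "z \<le> 1 - real n * x" "1 - real n * x < y"
    | "1 - real n * x < z" by linarith
  then show thesis
  proof cases
    case 1
    then have "w \<in> region SA n" using xb s by (simp add: region_def regA_def w)
    with n1 show thesis by (rule that)
  next
    case 2
    then have "w \<in> region SB n" using s by (simp add: region_def regB_def w)
    with n1 show thesis by (rule that)
  next
    case 3
    then have "w \<in> region SC n" using xb s by (simp add: region_def regC_def w)
    with n1 show thesis by (rule that)
  qed
qed

lemma gauss_branch_in_S3:
  assumes "w \<in> region t n" "n \<ge> 1"
  shows "gauss_branch t n w \<in> S3"
proof -
  obtain x y z where w: "w = (x,y,z)" by (cases w)
  have "0 < x" using region_x_pos assms w by blast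
  have nx: "real n * x \<le> 1" "1 < (real n + 1) * x"
    using region_x_bounds assms w by blast+
  show ?thesis
  proof (cases t)
    case SA
    then have "0 \<le> z" "z \<le> y" "y \<le> 1 - real n * x"
      using assms by (auto simp: region_def regA_def w)
    then show ?thesis
      using SA \<open>0 < x\<close> nx by (auto simp: gauss_branch_def w S3_def divide_simps algebra_simps)
  next
    case SB
    then have "0 \<le> z" "z \<le> 1 - real n * x" "1 - real n * x < y" "y \<le> x"
      using assms by (auto simp: region_def regB_def w)
    moreover have "x * (z + real n * x) \<le> x * 1"
      using \<open>0 < x\<close> \<open>z \<le> 1 - real n * x\<close> by (intro mult_left_mono) auto
    ultimately show ?thesis
      using SB \<open>0 < x\<close> nx by (auto simp: gauss_branch_def w S3_def divide_simps algebra_simps)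
  next
    case SC
    then have "1 - real n * x < z" "z \<le> y" "y \<le> x"
      using assms by (auto simp: region_def regC_def w)
    then show ?thesis
      using SC \<open>0 < x\<close> nx by (auto simp: gauss_branch_def w S3_def divide_simps algebra_simps)
  qed
qed

lemma G3_in_S3:
  assumes "w \<in> S3"
  shows "G3 w \<in> S3"
proof (cases "w = (0,0,0)")
  case True
  then show ?thesis by (simp add: G3_def S3_def)
next
  case False
  with assms obtain t n where "n \<ge> 1" "w \<in> region t n" by (rule S3_region_cover)
  then show ?thesis by (simp add: G3_eq_gauss_branch gauss_branch_in_S3)
qed

definition rational_point :: "pt \<Rightarrow> bool" where
  "rational_point w \<longleftrightarrow> fst w \<in> \<rat> \<and> fst (snd w) \<in> \<rat> \<and> snd (snd w) \<in> \<rat>"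

lemma rational_point_of_gauss_branch:
  assumes "w \<in> region t n" "n \<ge> 1" "rational_point (gauss_branch t n w)"
  shows "rational_point w"
proof -
  obtain x y z where w: "w = (x,y,z)" by (cases w)
  have "0 < x" using region_x_pos assms w by blast
  obtain a b c where abc: "gauss_branch t n w = (a,b,c)" "a \<in> \<rat>" "b \<in> \<rat>" "c \<in> \<rat>"
    using assms(3) by (cases "gauss_branch t n w") (auto simp: rational_point_def)
  have x_rat: "x \<in> \<rat>" if "1/x \<in> \<rat>"
    using Rats_divide[OF Rats_1 that] by simp
  have "x \<in> \<rat> \<and> y \<in> \<rat> \<and> z \<in> \<rat>"
  proof (cases t)
    case SA
    then have "1/x = a + real n" "y = b * x" "z = c * x"
      using abc(1) \<open>0 < x\<close> by (auto simp: gauss_branch_def w field_simps)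
    then show ?thesis using abc(2-4) x_rat by simp
  next
    case SB
    then have "1/x = a + real n - c" "y = x - c * x" "z = b * x - x + y"
      using abc(1) \<open>0 < x\<close> by (auto simp: gauss_branch_def w field_simps)
    then show ?thesis using abc(2-4) x_rat by simp
  next
    case SC
    then have "1/x = a - b + real n" "z = x - b * x" "y = c * x + z"
      using abc(1) \<open>0 < x\<close> by (auto simp: gauss_branch_def w field_simps)
    then show ?thesis using abc(2-4) x_rat by simp
  qed
  then show ?thesis by (simp add: rational_point_def w)
qed

lemma x_axis_region:
  assumes "(x,0,0) \<in> region t n" "n \<ge> 1"
  shows "t = SA"
  using region_x_bounds(1)[OF assms] assms
  by (cases t) (auto simp: region_def regB_def regC_def)

lemma cf_bounds:
  assumes "\<forall>j\<ge>i. a j \<ge> 1"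
  shows "0 \<le> cf a i k \<and> cf a i k \<le> 1"
  using assms
proof (induction k arbitrary: i)
  case 0
  then show ?case by simp
next
  case (Suc k)
  then have "0 \<le> cf a (Suc i) k" "real (a i) \<ge> 1" by auto
  then show ?case by (simp add: divide_simps)
qed

text \<open>In the next lemmas \<open>X j\<close> plays the role of the tail \<open>[0; a (j+1), a (j+2), \<dots>]\<close>.\<close>

lemma cf_dist_le_prod:
  assumes X: "\<And>j. X j = 1/(real (a (Suc j)) + X (Suc j))"
    and X01: "\<And>j. 0 \<le> X j \<and> X j \<le> 1" and a: "\<And>j. a (Suc j) \<ge> 1"
  shows "\<bar>cf a (Suc i) k - X i\<bar> \<le> (\<Prod>j\<in>{i..<i+k}. X j)"
proof (induction k arbitrary: i)
  case 0
  then show ?case using X01[of i] by simp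
next
  case (Suc k)
  define c where "c = cf a (Suc (Suc i)) k"
  define b where "b = real (a (Suc i))"
  define Y where "Y = X (Suc i)"
  have c01: "0 \<le> c" "c \<le> 1"
    using cf_bounds[of "Suc (Suc i)" a k] a unfolding c_def by (metis Suc_le_D Suc_le_mono)+
  have "b \<ge> 1" "0 \<le> Y" "Y \<le> 1" using a X01 unfolding b_def Y_def by auto
  have Xi: "X i = 1/(b + Y)" using X[of i] unfolding b_def Y_def by simp
  have "cf a (Suc i) (Suc k) - X i = (Y - c) * (1/(b + c)) * X i"
    unfolding Xi using \<open>b \<ge> 1\<close> \<open>0 \<le> Y\<close> c01 by (simp add: c_def b_def field_simps)
  then have "\<bar>cf a (Suc i) (Suc k) - X i\<bar> = \<bar>Y - c\<bar> * (1/(b + c)) * X i"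
    using \<open>b \<ge> 1\<close> c01 X01[of i] by (simp add: abs_mult)
  also have "\<dots> \<le> \<bar>Y - c\<bar> * X i"
    using \<open>b \<ge> 1\<close> c01 X01[of i] mult_left_le[of "1/(b + c)" "\<bar>Y - c\<bar>"]
    by (intro mult_right_mono) auto
  also have "\<dots> \<le> (\<Prod>j\<in>{Suc i..<Suc i+k}. X j) * X i"
    using Suc.IH[of "Suc i"] X01[of i] unfolding c_def Y_def by (intro mult_right_mono) auto
  also have "\<dots> = (\<Prod>j\<in>{i..<i+Suc k}. X j)"
    by (simp add: prod.atLeast_Suc_lessThan mult.commute)
  finally show ?case .
qed

lemma tails_prod_tendsto_zero:
  assumes X: "\<And>j. X j = 1/(real (a (Suc j)) + X (Suc j))"
    and X01: "\<And>j. 0 \<le> X j \<and> X j \<le> 1" and a: "\<And>j. a (Suc j) \<ge> 1"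
  shows "(\<lambda>k. \<Prod>j<k. X j) \<longlonglongrightarrow> 0"
proof -
  define P where "P k = (\<Prod>j<k. X j)" for k
  define c where "c = sqrt (1/2)"
  have c2: "c * c = 1/2" and c01: "0 < c" "c < 1" unfolding c_def by (auto simp: real_sqrt_mult[symmetric])
  have pair: "X j * X (Suc j) \<le> 1/2" for j
  proof -
    have "X j * X (Suc j) = X (Suc j) / (real (a (Suc j)) + X (Suc j))"
      using X[of j] by simp
    also have "\<dots> \<le> 1/2" using a[of j] X01[of "Suc j"] by (simp add: divide_simps)
    finally show ?thesis .
  qed
  have P0: "0 \<le> P k" for k unfolding P_def using X01 by (simp add: prod_nonneg)
  have "P k \<le> 2 * c^k \<and> P (Suc k) \<le> 2 * c^(Suc k)" for k
  proof (induction k)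
    case 0
    have "c * c \<le> c * 1" using c01 by (intro mult_left_mono) auto
    then show ?case using X01[of 0] c2 by (simp add: P_def)
  next
    case (Suc k)
    have "P (Suc (Suc k)) = P k * (X k * X (Suc k))" by (simp add: P_def)
    also have "\<dots> \<le> 2 * c^k * (1/2)"
      using pair[of k] P0[of k] Suc.IH X01[of k] X01[of "Suc k"] by (intro mult_mono) auto
    also have "\<dots> = 2 * c^(Suc (Suc k))" using c2 by simp
    finally show ?case using Suc.IH by simp
  qed
  then have "P k \<le> 2 * c^k" for k by blast
  moreover have "(\<lambda>k. 2 * c^k) \<longlonglongrightarrow> 0"
    using c01 tendsto_mult_right_zero[OF LIMSEQ_power_zero, of c 2] by simp
  ultimately have "P \<longlonglongrightarrow> 0"
    using P0 by (intro tendsto_sandwich[of "\<lambda>_. 0" P sequentially "\<lambda>k. 2 * c^k"]) simp_all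
  then show ?thesis unfolding P_def[abs_def] .
qed

lemma cf_value_of_tails:
  assumes X: "\<And>j. X j = 1/(real (a (Suc j)) + X (Suc j))"
    and X01: "\<And>j. 0 \<le> X j \<and> X j \<le> 1" and a: "\<And>j. a (Suc j) \<ge> 1"
  shows "cf_value a (X 0)"
proof -
  have "\<bar>cf a 1 k - X 0\<bar> \<le> (\<Prod>j<k. X j)" for k
    using cf_dist_le_prod[of X a, OF assms, of 0 k] by (simp add: atLeast0LessThan)
  then have "(\<lambda>k. \<bar>cf a 1 k - X 0\<bar>) \<longlonglongrightarrow> 0"
    by (intro tendsto_sandwich[OF _ _ tendsto_const tails_prod_tendsto_zero[of X a, OF assms]])
      simp_all
  then have "(\<lambda>k. cf a 1 k - X 0) \<longlonglongrightarrow> 0" by (rule tendsto_rabs_zero_cancel)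
  from tendsto_add[OF this tendsto_const[of "X 0"]] show ?thesis
    by (simp add: cf_value_def)
qed

lemma funpow_G3_in_S3: "v \<in> S3 \<Longrightarrow> (G3 ^^ k) v \<in> S3"
  by (induction k) (simp_all add: G3_in_S3)

lemma G3_not_rational_point:
  assumes "w \<in> S3" "\<not> rational_point w"
  shows "\<not> rational_point (G3 w)"
proof -
  have "w \<noteq> (0,0,0)" using assms(2) by (auto simp: rational_point_def)
  with assms(1) obtain t n where "n \<ge> 1" "w \<in> region t n" by (rule S3_region_cover)
  then show ?thesis
    using assms(2) rational_point_of_gauss_branch G3_eq_gauss_branch by metis
qed

lemma funpow_G3_nonzero:
  assumes "v \<in> S3" "\<not> rational_point v"
  shows "(G3 ^^ k) v \<noteq> (0,0,0)"
proof -
  have "\<not> rational_point ((G3 ^^ k) v)"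
    by (induction k) (simp_all add: assms G3_not_rational_point funpow_G3_in_S3)
  then show ?thesis by (auto simp: rational_point_def)
qed

lemma itinerary_exists:
  assumes "v \<in> S3" "\<And>k. (G3 ^^ k) v \<noteq> (0,0,0)"
  shows "\<exists>t a. is_itinerary v t a"
proof -
  have "\<forall>k. \<exists>p. snd p \<ge> 1 \<and> (G3 ^^ k) v \<in> region (fst p) (snd p)"
    using S3_region_cover funpow_G3_in_S3 assms by (metis fst_conv snd_conv)
  then obtain p where p: "\<And>k. snd (p k) \<ge> 1 \<and> (G3 ^^ k) v \<in> region (fst (p k)) (snd (p k))"
    by metis
  have "is_itinerary v (\<lambda>k. fst (p (k - 1))) (\<lambda>k. snd (p (k - 1)))"
    unfolding is_itinerary_def using p by auto
  then show ?thesis by blast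
qed

lemma is_itinerary_Suc:
  "is_itinerary v t a \<Longrightarrow> a (Suc k) \<ge> 1 \<and> (G3 ^^ k) v \<in> region (t (Suc k)) (a (Suc k))"
  unfolding is_itinerary_def by (metis diff_Suc_1 le_add1 plus_1_eq_Suc)

lemma itinerary_A_step:
  assumes "is_itinerary v t a" "t (Suc k) = SA" "(G3 ^^ k) v = (p,q,r)"
  shows "0 < p \<and> (G3 ^^ Suc k) v = (1/p - real (a (Suc k)), q/p, r/p)"
  using is_itinerary_Suc[OF assms(1), of k] assms(2,3) region_x_pos
  by (fastforce simp: G3_eq_gauss_branch gauss_branch_def)

lemma x_axis_itinerary_all_A:
  assumes "is_itinerary (x,0,0) t a" "k \<ge> 1"
  shows "t k = SA"
proof -
  have axis: "snd ((G3 ^^ j) (x,0,0)) = (0,0)" for j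
  proof (induction j)
    case (Suc j)
    then obtain p where p: "(G3 ^^ j) (x,0,0) = (p,0,0)" by (metis prod.collapse)
    then have "t (Suc j) = SA"
      using is_itinerary_Suc[OF assms(1)] x_axis_region by metis
    then show ?case using itinerary_A_step[OF assms(1) _ p] by simp
  qed simp
  obtain j where "k = Suc j" using assms(2) not0_implies_Suc by fastforce
  then show ?thesis
    using is_itinerary_Suc[OF assms(1), of j] x_axis_region axis[of j] by (metis prod.collapse)
qed

lemma all_A_itinerary_imp_x_axis_cf_value:
  assumes "(x,y,z) \<in> S3" "is_itinerary (x,y,z) t a" "\<forall>k\<ge>1. t k = SA"
  shows "y = 0 \<and> z = 0 \<and> cf_value a x"
proof -
  define X where "X k = fst ((G3 ^^ k) (x,y,z))" for k
  define Y where "Y k = fst (snd ((G3 ^^ k) (x,y,z)))" for k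
  have step: "0 < X k \<and> X k = 1/(real (a (Suc k)) + X (Suc k)) \<and> Y (Suc k) = Y k / X k" for k
    using itinerary_A_step[OF assms(2), of k] assms(3) unfolding X_def Y_def
    by (cases "(G3 ^^ k) (x,y,z)") auto
  have XY01: "0 \<le> X k \<and> X k \<le> 1 \<and> 0 \<le> Y k \<and> Y k \<le> 1" for k
    using funpow_G3_in_S3[OF assms(1), of k] unfolding X_def Y_def S3_def
    by (cases "(G3 ^^ k) (x,y,z)") auto
  have a1: "a (Suc k) \<ge> 1" for k using is_itinerary_Suc[OF assms(2)] by blast
  have y_eq: "y = Y k * (\<Prod>j<k. X j)" for k
  proof (induction k)
    case 0
    then show ?case by (simp add: Y_def)
  next
    case (Suc k)
    have "X k \<noteq> 0" "Y (Suc k) = Y k / X k" using step[of k] by auto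
    then show ?case using Suc.IH by simp
  qed
  have "y \<le> (\<Prod>j<k. X j)" for k
    unfolding y_eq[of k] using XY01 mult_left_le_one_le[of "\<Prod>j<k. X j" "Y k"]
    by (simp add: prod_nonneg)
  then have "y \<le> 0"
    using LIMSEQ_le_const[OF tails_prod_tendsto_zero[of X a]] step XY01 a1 by blast
  moreover have "0 \<le> z" "z \<le> y" using assms(1) by (auto simp: S3_def)
  moreover have "cf_value a (X 0)"
    using cf_value_of_tails[of X a] step XY01 a1 by blast
  ultimately show ?thesis by (simp add: X_def)
qed

theorem mainTheorem14:
  fixes x y z :: real
  assumes "(x, y, z) \<in> S3"
    and "x \<notin> \<rat> \<or> y \<notin> \<rat> \<or> z \<notin> \<rat>"
  shows "(\<forall>k. (G3 ^^ k) (x, y, z) \<noteq> (0, 0, 0))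
       \<and> (\<exists>t a. is_itinerary (x, y, z) t a)
       \<and> (\<forall>t a. is_itinerary (x, y, z) t a \<longrightarrow>
             (((\<forall>k\<ge>1. t k = SA) \<longleftrightarrow> (y = 0 \<and> z = 0))
              \<and> ((\<forall>k\<ge>1. t k = SA) \<longrightarrow> cf_value a x)))"
proof -
  have "\<not> rational_point (x,y,z)" using assms(2) by (simp add: rational_point_def)
  then have nonzero: "\<forall>k. (G3 ^^ k) (x,y,z) \<noteq> (0,0,0)"
    using funpow_G3_nonzero assms(1) by blast
  have "(\<forall>k\<ge>1. t k = SA) \<longleftrightarrow> y = 0 \<and> z = 0" "(\<forall>k\<ge>1. t k = SA) \<longrightarrow> cf_value a x"
    if "is_itinerary (x,y,z) t a" for t a
    using all_A_itinerary_imp_x_axis_cf_value[OF assms(1) that] x_axis_itinerary_all_A that by blast+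
  then show ?thesis
    using nonzero itinerary_exists[OF assms(1)] by blast
qed

end
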